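(* For a negative game $A$, let $!A$ be the infinitary parallel composition of countably many copies of $A$, i.e. the event structure whose events are the pairs $(i,a)$ with $i \in \omega$ and $a \in A$, with causal order, conflict and polarity inherited componentwise from $A$ (and no causality or conflict between distinct copies). Equip $!A$ with the groups \begin{align*} \mathcal{N}_{!A} &= \{ (\pi, (\alpha_i)_{i\in \omega}) \mid \pi \text{ is a permutation of $\omega$, and } \alpha_i \in \mathcal{N}_A \text{ for all }i \in \omega \} \\ \mathcal{P}_{!A} &= \{ (\alpha_i)_{i \in \omega} \mid \alpha_i \in \mathcal{P}_A \text{ for all }i \in \omega \} \end{align*} under componentwise multiplication, with actions on $!A$ defined by \begin{align*} \mathit{act}_{\mathcal{N}}((\pi, (\alpha_i)_{i\in \omega}), (i, a)) &= (\pi(i), \alpha_i(a)) \\ \mathit{act}_{\mathcal{P}}((\alpha_i)_{i\in \omega}, (i, a)) &= (i, \alpha_i(a)) \end{align*} and distributive law \begin{align*} \lambda_{!A} : \mathcal{N}_{!A} \times \mathcal{P}_{!A} &\longrightarrow \mathcal{P}_{!A} \times \mathcal{N}_{!A} \\ ((\pi, (\alpha_i)_{i \in \omega}), (\beta_i)_{i \in \omega}) &\longmapsto \left(\left(\beta'_{\pi^{-1}(i)}\right)_{i \in \omega}, (\pi, (\alpha'_i)_{i \in \omega})\right) \end{align*} where for every $i \in \omega$, $(\beta'_i, \alpha'_i) = \lambda_A(\alpha_i, \beta_i).$ This satisfies the axioms for a game.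
   Context: An event structure (with polarity) is a partial order $(A,\leq)$ with finitely many predecessors for each element, a polarity function $A \to \{-,+\}$, and an irreflexive symmetric hereditary conflict relation. An automorphism $\alpha$ of $A$ is negative if whenever $\alpha$ fixes a configuration $x$ and $x \subseteq^+ y$ (extension by positive events only) then $\alpha$ fixes $y$; positive is defined dually with $\subseteq^-$. A game is an event structure $A$ equipped with a group $\mathcal{N}_A$ with a negative left action $\mathit{act}_{\mathcal{N}}$ on $A$, a group $\mathcal{P}_A$ with a positive left action $\mathit{act}_{\mathcal{P}}$ on $A$, and a distributive law $\lambda_A : \mathcal{N}_A \times \mathcal{P}_A \to \mathcal{P}_A \times \mathcal{N}_A$ between the monads $\mathcal{N}_A \times (-)$ and $\mathcal{P}_A \times (-)$ on Set, such that acting by $\beta$ then by $\alpha$ equals acting by the result of applying $\lambda_A$ to $(\alpha,\beta)$ (i.e. the two actions are permuted by $\lambda_A$). A game is negative if all its initial (minimal) moves are negative. $!A$ denotes the resource modality (exponential). *)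

theory Defs
  imports "HOL-Algebra.Group"
begin

record 'a evs =
  ev  :: "'a set"
  leq :: "'a \<Rightarrow> 'a \<Rightarrow> bool"
  cfl :: "'a \<Rightarrow> 'a \<Rightarrow> bool"
  pos :: "'a \<Rightarrow> bool"

definition event_structure :: "('a, 'z) evs_scheme \<Rightarrow> bool" where
  "event_structure A \<longleftrightarrow>
     (\<forall>a\<in>ev A. leq A a a) \<and>
     (\<forall>a\<in>ev A. \<forall>b\<in>ev A. leq A a b \<and> leq A b a \<longrightarrow> a = b) \<and>
     (\<forall>a\<in>ev A. \<forall>b\<in>ev A. \<forall>c\<in>ev A. leq A a b \<and> leq A b c \<longrightarrow> leq A a c) \<and>
     (\<forall>a\<in>ev A. finite {b\<in>ev A. leq A b a}) \<and>
     (\<forall>a\<in>ev A. \<not> cfl A a a) \<and>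
     (\<forall>a\<in>ev A. \<forall>b\<in>ev A. cfl A a b \<longrightarrow> cfl A b a) \<and>
     (\<forall>a\<in>ev A. \<forall>b\<in>ev A. \<forall>c\<in>ev A. cfl A a b \<and> leq A b c \<longrightarrow> cfl A a c)"

definition config :: "('a, 'z) evs_scheme \<Rightarrow> 'a set \<Rightarrow> bool" where
  "config A x \<longleftrightarrow> x \<subseteq> ev A \<and> finite x \<and>
     (\<forall>a\<in>x. \<forall>b\<in>ev A. leq A b a \<longrightarrow> b \<in> x) \<and>
     (\<forall>a\<in>x. \<forall>b\<in>x. \<not> cfl A a b)"

definition ext_pos :: "('a, 'z) evs_scheme \<Rightarrow> 'a set \<Rightarrow> 'a set \<Rightarrow> bool" where
  "ext_pos A x y \<longleftrightarrow> config A x \<and> config A y \<and> x \<subseteq> y \<and> (\<forall>e\<in>y - x. pos A e)"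

definition ext_neg :: "('a, 'z) evs_scheme \<Rightarrow> 'a set \<Rightarrow> 'a set \<Rightarrow> bool" where
  "ext_neg A x y \<longleftrightarrow> config A x \<and> config A y \<and> x \<subseteq> y \<and> (\<forall>e\<in>y - x. \<not> pos A e)"

definition automorphism :: "('a, 'z) evs_scheme \<Rightarrow> ('a \<Rightarrow> 'a) \<Rightarrow> bool" where
  "automorphism A f \<longleftrightarrow> bij_betw f (ev A) (ev A) \<and>
     (\<forall>a\<in>ev A. \<forall>b\<in>ev A. leq A (f a) (f b) \<longleftrightarrow> leq A a b) \<and>
     (\<forall>a\<in>ev A. \<forall>b\<in>ev A. cfl A (f a) (f b) \<longleftrightarrow> cfl A a b) \<and>
     (\<forall>a\<in>ev A. pos A (f a) \<longleftrightarrow> pos A a)"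

definition fixes_conf :: "('a \<Rightarrow> 'a) \<Rightarrow> 'a set \<Rightarrow> bool" where
  "fixes_conf f x \<longleftrightarrow> (\<forall>e\<in>x. f e = e)"

definition negative_aut :: "('a, 'z) evs_scheme \<Rightarrow> ('a \<Rightarrow> 'a) \<Rightarrow> bool" where
  "negative_aut A f \<longleftrightarrow> automorphism A f \<and>
     (\<forall>x y. config A x \<and> fixes_conf f x \<and> ext_pos A x y \<longrightarrow> fixes_conf f y)"

definition positive_aut :: "('a, 'z) evs_scheme \<Rightarrow> ('a \<Rightarrow> 'a) \<Rightarrow> bool" where
  "positive_aut A f \<longleftrightarrow> automorphism A f \<and>
     (\<forall>x y. config A x \<and> fixes_conf f x \<and> ext_neg A x y \<longrightarrow> fixes_conf f y)"

definition left_action ::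
  "('g, 'b) monoid_scheme \<Rightarrow> ('a, 'z) evs_scheme \<Rightarrow> ('g \<Rightarrow> 'a \<Rightarrow> 'a) \<Rightarrow> bool" where
  "left_action G A act \<longleftrightarrow>
     (\<forall>g\<in>carrier G. automorphism A (act g)) \<and>
     (\<forall>a\<in>ev A. act (one G) a = a) \<and>
     (\<forall>g\<in>carrier G. \<forall>h\<in>carrier G. \<forall>a\<in>ev A. act (mult G g h) a = act g (act h a))"

definition negative_action ::
  "('g, 'b) monoid_scheme \<Rightarrow> ('a, 'z) evs_scheme \<Rightarrow> ('g \<Rightarrow> 'a \<Rightarrow> 'a) \<Rightarrow> bool" where
  "negative_action G A act \<longleftrightarrow> left_action G A act \<and> (\<forall>g\<in>carrier G. negative_aut A (act g))"

definition positive_action ::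
  "('g, 'b) monoid_scheme \<Rightarrow> ('a, 'z) evs_scheme \<Rightarrow> ('g \<Rightarrow> 'a \<Rightarrow> 'a) \<Rightarrow> bool" where
  "positive_action G A act \<longleftrightarrow> left_action G A act \<and> (\<forall>g\<in>carrier G. positive_aut A (act g))"

text \<open>A distributive law N\<times>(P\<times>-) \<Rightarrow> P\<times>(N\<times>-) between the monads N\<times>(-) and P\<times>(-) on Set,
  given (by naturality) by a function lam : N \<times> P \<rightarrow> P \<times> N; the four axioms are the
  unit and multiplication laws of a distributive law.\<close>
definition distr_law ::
  "('n, 'b) monoid_scheme \<Rightarrow> ('p, 'c) monoid_scheme \<Rightarrow> ('n \<times> 'p \<Rightarrow> 'p \<times> 'n) \<Rightarrow> bool" where
  "distr_law N P lam \<longleftrightarrow>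
     (\<forall>\<alpha>\<in>carrier N. \<forall>\<beta>\<in>carrier P.
        fst (lam (\<alpha>, \<beta>)) \<in> carrier P \<and> snd (lam (\<alpha>, \<beta>)) \<in> carrier N) \<and>
     (\<forall>\<alpha>\<in>carrier N. lam (\<alpha>, one P) = (one P, \<alpha>)) \<and>
     (\<forall>\<beta>\<in>carrier P. lam (one N, \<beta>) = (\<beta>, one N)) \<and>
     (\<forall>\<alpha>\<in>carrier N. \<forall>\<alpha>'\<in>carrier N. \<forall>\<beta>\<in>carrier P.
        lam (mult N \<alpha> \<alpha>', \<beta>) =
          (let (\<beta>1, \<alpha>1) = lam (\<alpha>', \<beta>); (\<beta>2, \<alpha>2) = lam (\<alpha>, \<beta>1) in (\<beta>2, mult N \<alpha>2 \<alpha>1))) \<and>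
     (\<forall>\<alpha>\<in>carrier N. \<forall>\<beta>\<in>carrier P. \<forall>\<beta>'\<in>carrier P.
        lam (\<alpha>, mult P \<beta> \<beta>') =
          (let (\<beta>1, \<alpha>1) = lam (\<alpha>, \<beta>); (\<beta>2, \<alpha>2) = lam (\<alpha>1, \<beta>') in (mult P \<beta>1 \<beta>2, \<alpha>2)))"

definition game ::
  "('a, 'z) evs_scheme \<Rightarrow> ('n, 'b) monoid_scheme \<Rightarrow> ('n \<Rightarrow> 'a \<Rightarrow> 'a)
     \<Rightarrow> ('p, 'c) monoid_scheme \<Rightarrow> ('p \<Rightarrow> 'a \<Rightarrow> 'a) \<Rightarrow> ('n \<times> 'p \<Rightarrow> 'p \<times> 'n) \<Rightarrow> bool" where
  "game A N actN P actP lam \<longleftrightarrow>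
     event_structure A \<and> group N \<and> group P \<and>
     negative_action N A actN \<and> positive_action P A actP \<and>
     distr_law N P lam \<and>
     (\<forall>\<alpha>\<in>carrier N. \<forall>\<beta>\<in>carrier P. \<forall>a\<in>ev A.
        actN \<alpha> (actP \<beta> a) = actP (fst (lam (\<alpha>, \<beta>))) (actN (snd (lam (\<alpha>, \<beta>))) a))"

definition negative_game ::
  "('a, 'z) evs_scheme \<Rightarrow> ('n, 'b) monoid_scheme \<Rightarrow> ('n \<Rightarrow> 'a \<Rightarrow> 'a)
     \<Rightarrow> ('p, 'c) monoid_scheme \<Rightarrow> ('p \<Rightarrow> 'a \<Rightarrow> 'a) \<Rightarrow> ('n \<times> 'p \<Rightarrow> 'p \<times> 'n) \<Rightarrow> bool" where
  "negative_game A N actN P actP lam \<longleftrightarrow> game A N actN P actP lam \<and>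
     (\<forall>a\<in>ev A. (\<forall>b\<in>ev A. leq A b a \<longrightarrow> b = a) \<longrightarrow> \<not> pos A a)"

definition bang_es :: "('a, 'z) evs_scheme \<Rightarrow> (nat \<times> 'a) evs" where
  "bang_es A = \<lparr> ev = UNIV \<times> ev A,
                 leq = (\<lambda>(i, a) (j, b). i = j \<and> leq A a b),
                 cfl = (\<lambda>(i, a) (j, b). i = j \<and> cfl A a b),
                 pos = (\<lambda>(i, a). pos A a) \<rparr>"

text \<open>N of !A: pairs (permutation of omega, family in N_A); the multiplication is the one
  making act_N a left action (wreath product).\<close>
definition bang_N :: "('n, 'b) monoid_scheme \<Rightarrow> ((nat \<Rightarrow> nat) \<times> (nat \<Rightarrow> 'n)) monoid" where
  "bang_N N = \<lparr> carrier = {(\<pi>, \<alpha>). bij \<pi> \<and> (\<forall>i. \<alpha> i \<in> carrier N)},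
                mult = (\<lambda>(\<pi>, \<alpha>) (\<pi>', \<alpha>'). (\<pi> \<circ> \<pi>', \<lambda>i. mult N (\<alpha> (\<pi>' i)) (\<alpha>' i))),
                one = (id, \<lambda>i. one N) \<rparr>"

definition bang_P :: "('p, 'c) monoid_scheme \<Rightarrow> (nat \<Rightarrow> 'p) monoid" where
  "bang_P P = \<lparr> carrier = {\<beta>. \<forall>i. \<beta> i \<in> carrier P},
                mult = (\<lambda>\<beta> \<beta>'. \<lambda>i. mult P (\<beta> i) (\<beta>' i)),
                one = (\<lambda>i. one P) \<rparr>"

definition bang_actN :: "('n \<Rightarrow> 'a \<Rightarrow> 'a) \<Rightarrow> (nat \<Rightarrow> nat) \<times> (nat \<Rightarrow> 'n) \<Rightarrow> nat \<times> 'a \<Rightarrow> nat \<times> 'a" where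
  "bang_actN actN = (\<lambda>(\<pi>, \<alpha>) (i, a). (\<pi> i, actN (\<alpha> i) a))"

definition bang_actP :: "('p \<Rightarrow> 'a \<Rightarrow> 'a) \<Rightarrow> (nat \<Rightarrow> 'p) \<Rightarrow> nat \<times> 'a \<Rightarrow> nat \<times> 'a" where
  "bang_actP actP = (\<lambda>\<beta> (i, a). (i, actP (\<beta> i) a))"

definition bang_lam :: "('n \<times> 'p \<Rightarrow> 'p \<times> 'n)
    \<Rightarrow> ((nat \<Rightarrow> nat) \<times> (nat \<Rightarrow> 'n)) \<times> (nat \<Rightarrow> 'p) \<Rightarrow> (nat \<Rightarrow> 'p) \<times> ((nat \<Rightarrow> nat) \<times> (nat \<Rightarrow> 'n))" where
  "bang_lam lam = (\<lambda>((\<pi>, \<alpha>), \<beta>).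
      ((\<lambda>i. fst (lam (\<alpha> (inv_into UNIV \<pi> i), \<beta> (inv_into UNIV \<pi> i)))),
       (\<pi>, (\<lambda>i. snd (lam (\<alpha> i, \<beta> i))))))"

end

theory Submission
  imports Defs
begin

text \<open>
  Order, conflict and polarity of !A relate only events of the same copy, and both groups act
  copywise, so each game axiom for !A reduces to the same axiom for A; the permutation of the
  copies carried by an element of N_!A is harmless because it is a bijection.
  Negativity of A is needed only to see that N_!A acts by negative automorphisms. Suppose
  (\<pi>, \<alpha>) fixes x and x \<subseteq>+ y. If the copy i meets y, it already meets x: otherwise
  the slice of y in copy i would be a nonempty positive extension of the empty configuration,
  whose minimal events would be positive. Hence \<pi> i = i, and \<alpha> i fixes the slice of y
  because it is negative and fixes the slice of x.
\<close>

lemma bang_es_simps [simp]: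
  "ev (bang_es A) = UNIV \<times> ev A"
  "leq (bang_es A) (i, a) (j, b) \<longleftrightarrow> i = j \<and> leq A a b"
  "cfl (bang_es A) (i, a) (j, b) \<longleftrightarrow> i = j \<and> cfl A a b"
  "pos (bang_es A) (i, a) \<longleftrightarrow> pos A a"
  by (simp_all add: bang_es_def)

lemma event_structure_bang:
  assumes "event_structure A"
  shows "event_structure (bang_es A)"
proof -
  have refl_A: "\<forall>a\<in>ev A. leq A a a"
    and antisym_A: "\<forall>a\<in>ev A. \<forall>b\<in>ev A. leq A a b \<and> leq A b a \<longrightarrow> a = b"
    and trans_A: "\<forall>a\<in>ev A. \<forall>b\<in>ev A. \<forall>c\<in>ev A. leq A a b \<and> leq A b c \<longrightarrow> leq A a c"
    and fin_A: "\<forall>a\<in>ev A. finite {b\<in>ev A. leq A b a}"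
    and irrefl_A: "\<forall>a\<in>ev A. \<not> cfl A a a"
    and sym_A: "\<forall>a\<in>ev A. \<forall>b\<in>ev A. cfl A a b \<longrightarrow> cfl A b a"
    and hered_A: "\<forall>a\<in>ev A. \<forall>b\<in>ev A. \<forall>c\<in>ev A. cfl A a b \<and> leq A b c \<longrightarrow> cfl A a c"
    using assms unfolding event_structure_def by blast+
  have down: "{q \<in> UNIV \<times> ev A. leq (bang_es A) q (i, a)} = {i} \<times> {b \<in> ev A. leq A b a}" for i a
    by auto
  show ?thesis
    unfolding event_structure_def bang_es_simps(1) split_paired_Ball_Sigma
    by (intro conjI; simp only: bang_es_simps prod.inject down finite_cartesian_product_iff)
      (use refl_A antisym_A trans_A fin_A irrefl_A sym_A hered_A in blast)+
qed

definition negative_es :: "('a, 'z) evs_scheme \<Rightarrow> bool" where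
  "negative_es A \<longleftrightarrow> (\<forall>a\<in>ev A. (\<forall>b\<in>ev A. leq A b a \<longrightarrow> b = a) \<longrightarrow> \<not> pos A a)"

lemma below_minimal_event:
  assumes "event_structure A" and a: "a \<in> ev A"
  shows "\<exists>m\<in>ev A. leq A m a \<and> (\<forall>b\<in>ev A. leq A b m \<longrightarrow> b = m)"
proof -
  define D where "D x = {b \<in> ev A. leq A b x}" for x
  have refl_A: "\<forall>a\<in>ev A. leq A a a"
    and antisym_A: "\<forall>a\<in>ev A. \<forall>b\<in>ev A. leq A a b \<and> leq A b a \<longrightarrow> a = b"
    and trans_A: "\<forall>a\<in>ev A. \<forall>b\<in>ev A. \<forall>c\<in>ev A. leq A a b \<and> leq A b c \<longrightarrow> leq A a c"
    and fin_A: "\<forall>a\<in>ev A. finite (D a)"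
    using assms(1) unfolding event_structure_def D_def by blast+
  obtain m where m: "m \<in> D a" and least: "\<And>z. z \<in> D a \<Longrightarrow> card (D m) \<le> card (D z)"
    using ex_has_least_nat[of "\<lambda>m. m \<in> D a" a "\<lambda>m. card (D m)"] refl_A a
    unfolding D_def by blast
  have "b = m" if b: "b \<in> ev A" "leq A b m" for b
  proof (rule ccontr)
    assume "b \<noteq> m"
    with b m refl_A antisym_A trans_A have "D b \<subset> D m"
      unfolding D_def by blast
    with fin_A m have "card (D b) < card (D m)"
      unfolding D_def by (simp add: psubset_card_mono)
    moreover from b m trans_A a have "b \<in> D a"
      unfolding D_def by blast
    ultimately show False
      using least by (meson leD)
  qed
  with m show ?thesis
    unfolding D_def by blast
qed

lemma ext_pos_from_empty:
  assumes "event_structure A" and "negative_es A" and "ext_pos A {} y"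
  shows "y = {}"
proof (rule ccontr)
  assume "y \<noteq> {}"
  then obtain a where a: "a \<in> y" by blast
  have y: "config A y" "\<forall>e\<in>y. pos A e"
    using assms(3) unfolding ext_pos_def by auto
  then have "a \<in> ev A" and down: "\<forall>e\<in>y. \<forall>b\<in>ev A. leq A b e \<longrightarrow> b \<in> y"
    using a unfolding config_def by blast+
  then obtain m where m: "m \<in> ev A" "leq A m a" "\<forall>b\<in>ev A. leq A b m \<longrightarrow> b = m"
    using below_minimal_event[OF assms(1)] by blast
  have "m \<in> y"
    using down a m by blast
  then show False
    using m(1,3) y(2) assms(2) unfolding negative_es_def by blast
qed

definition slice :: "(nat \<times> 'a) set \<Rightarrow> nat \<Rightarrow> 'a set" where
  "slice x i = Pair i -` x"

lemma mem_slice [simp]: "a \<in> slice x i \<longleftrightarrow> (i, a) \<in> x"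
  by (simp add: slice_def)

lemma config_slice:
  assumes "config (bang_es A) x"
  shows "config A (slice x i)"
proof -
  have x: "x \<subseteq> UNIV \<times> ev A" "finite x"
    and down: "\<forall>p\<in>x. \<forall>q\<in>UNIV \<times> ev A. leq (bang_es A) q p \<longrightarrow> q \<in> x"
    and consistent: "\<forall>p\<in>x. \<forall>q\<in>x. \<not> cfl (bang_es A) p q"
    using assms unfolding config_def by simp_all
  have "finite (slice x i)"
    using x(2) unfolding slice_def by (rule finite_vimageI) (simp add: inj_on_def)
  moreover have "slice x i \<subseteq> ev A"
    using x(1) by auto
  moreover have "b \<in> slice x i" if "a \<in> slice x i" "b \<in> ev A" "leq A b a" for a b
    using down that by force
  moreover have "\<not> cfl A a b" if "a \<in> slice x i" "b \<in> slice x i" for a b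
    using consistent that by force
  ultimately show ?thesis
    unfolding config_def by blast
qed

lemma ext_pos_slice:
  assumes "ext_pos (bang_es A) x y"
  shows "ext_pos A (slice x i) (slice y i)"
proof -
  have "config (bang_es A) x" "config (bang_es A) y" "x \<subseteq> y" "\<forall>e\<in>y - x. pos (bang_es A) e"
    using assms unfolding ext_pos_def by blast+
  then show ?thesis
    unfolding ext_pos_def by (simp add: config_slice subset_eq) force
qed

lemma ext_neg_slice:
  assumes "ext_neg (bang_es A) x y"
  shows "ext_neg A (slice x i) (slice y i)"
proof -
  have "config (bang_es A) x" "config (bang_es A) y" "x \<subseteq> y" "\<forall>e\<in>y - x. \<not> pos (bang_es A) e"
    using assms unfolding ext_neg_def by blast+
  then show ?thesis
    unfolding ext_neg_def by (simp add: config_slice subset_eq) force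
qed

definition bang_map :: "(nat \<Rightarrow> nat) \<Rightarrow> (nat \<Rightarrow> 'a \<Rightarrow> 'a) \<Rightarrow> nat \<times> 'a \<Rightarrow> nat \<times> 'a" where
  "bang_map \<pi> f = (\<lambda>(i, a). (\<pi> i, f i a))"

lemma bang_map_apply [simp]: "bang_map \<pi> f (i, a) = (\<pi> i, f i a)"
  by (simp add: bang_map_def)

lemma automorphism_bang_map:
  assumes \<pi>: "bij \<pi>" and f: "\<forall>i. automorphism A (f i)"
  shows "automorphism (bang_es A) (bang_map \<pi> f)"
proof -
  have inj: "inj_on (f i) (ev A)" and onto: "f i ` ev A = ev A"
    and leq_f: "\<forall>a\<in>ev A. \<forall>b\<in>ev A. leq A (f i a) (f i b) \<longleftrightarrow> leq A a b"
    and cfl_f: "\<forall>a\<in>ev A. \<forall>b\<in>ev A. cfl A (f i a) (f i b) \<longleftrightarrow> cfl A a b"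
    and pos_f: "\<forall>a\<in>ev A. pos A (f i a) \<longleftrightarrow> pos A a" for i
    using f unfolding automorphism_def bij_betw_def by auto
  have \<pi>_eq: "\<pi> i = \<pi> j \<longleftrightarrow> i = j" for i j
    using \<pi> by (simp add: bij_def inj_eq)
  have "bij_betw (bang_map \<pi> f) (UNIV \<times> ev A) (UNIV \<times> ev A)"
  proof (rule bij_betw_imageI)
    show "inj_on (bang_map \<pi> f) (UNIV \<times> ev A)"
      unfolding inj_on_def split_paired_Ball_Sigma
      by (simp only: bang_map_apply prod.inject \<pi>_eq) (use inj in \<open>blast dest: inj_onD\<close>)
    have "(j, c) \<in> bang_map \<pi> f ` (UNIV \<times> ev A)" if "c \<in> ev A" for j c
    proof -
      obtain i where j: "j = \<pi> i"
        using surjD[OF bij_is_surj[OF \<pi>]] by blast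
      have "c \<in> f i ` ev A"
        using onto that by simp
      then obtain a where "a \<in> ev A" "c = f i a" ..
      then show ?thesis
        unfolding j by (intro image_eqI[where x = "(i, a)"]) simp_all
    qed
    with onto show "bang_map \<pi> f ` (UNIV \<times> ev A) = UNIV \<times> ev A"
      by fastforce
  qed
  then show ?thesis
    unfolding automorphism_def bang_es_simps(1) split_paired_Ball_Sigma
    by (intro conjI ballI; simp only: bang_map_apply bang_es_simps \<pi>_eq)
      (use leq_f cfl_f pos_f in auto)
qed

lemma negative_aut_bang_map:
  assumes "event_structure A" and "negative_es A"
    and \<pi>: "bij \<pi>" and f: "\<forall>i. negative_aut A (f i)"
  shows "negative_aut (bang_es A) (bang_map \<pi> f)"
  unfolding negative_aut_def
proof (intro conjI allI impI)
  show "automorphism (bang_es A) (bang_map \<pi> f)"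
    using automorphism_bang_map[OF \<pi>] f unfolding negative_aut_def by blast
  fix x y
  assume "config (bang_es A) x \<and> fixes_conf (bang_map \<pi> f) x \<and> ext_pos (bang_es A) x y"
  then have fixed: "\<forall>e\<in>x. bang_map \<pi> f e = e" and xy: "ext_pos (bang_es A) x y"
    unfolding fixes_conf_def by blast+
  show "fixes_conf (bang_map \<pi> f) y"
    unfolding fixes_conf_def
  proof
    fix e assume "e \<in> y"
    then obtain i a where e: "e = (i, a)" and a: "a \<in> slice y i"
      by (cases e) simp
    have slice_xy: "ext_pos A (slice x i) (slice y i)"
      using ext_pos_slice[OF xy] .
    have "fixes_conf (f i) (slice x i)"
      using fixed unfolding fixes_conf_def by fastforce
    moreover have "config A (slice x i)"
      using slice_xy unfolding ext_pos_def by blast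
    ultimately have "fixes_conf (f i) (slice y i)"
      using f[rule_format, of i] slice_xy unfolding negative_aut_def by blast
    with a have "f i a = a"
      unfolding fixes_conf_def by blast
    moreover have "slice x i \<noteq> {}"
    proof
      assume "slice x i = {}"
      with slice_xy have "slice y i = {}"
        using ext_pos_from_empty[OF assms(1,2)] by simp
      with a show False
        by simp
    qed
    then obtain c where "(i, c) \<in> x"
      by auto
    with fixed have "\<pi> i = i"
      by fastforce
    ultimately show "bang_map \<pi> f e = e"
      using e by simp
  qed
qed

lemma positive_aut_bang_map:
  assumes f: "\<forall>i. positive_aut A (f i)"
  shows "positive_aut (bang_es A) (bang_map id f)"
  unfolding positive_aut_def
proof (intro conjI allI impI)
  show "automorphism (bang_es A) (bang_map id f)"
    using automorphism_bang_map[OF bij_id] f unfolding positive_aut_def by blast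
  fix x y
  assume "config (bang_es A) x \<and> fixes_conf (bang_map id f) x \<and> ext_neg (bang_es A) x y"
  then have fixed: "\<forall>e\<in>x. bang_map id f e = e" and xy: "ext_neg (bang_es A) x y"
    unfolding fixes_conf_def by blast+
  show "fixes_conf (bang_map id f) y"
    unfolding fixes_conf_def
  proof
    fix e assume "e \<in> y"
    then obtain i a where e: "e = (i, a)" and a: "a \<in> slice y i"
      by (cases e) simp
    have slice_xy: "ext_neg A (slice x i) (slice y i)"
      using ext_neg_slice[OF xy] .
    have "fixes_conf (f i) (slice x i)"
      using fixed unfolding fixes_conf_def by fastforce
    moreover have "config A (slice x i)"
      using slice_xy unfolding ext_neg_def by blast
    ultimately have "fixes_conf (f i) (slice y i)"
      using f[rule_format, of i] slice_xy unfolding positive_aut_def by blast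
    with a e show "bang_map id f e = e"
      unfolding fixes_conf_def by simp
  qed
qed

lemma bang_P_simps [simp]:
  "carrier (bang_P P) = {\<beta>. \<forall>i. \<beta> i \<in> carrier P}"
  "\<beta> \<otimes>\<^bsub>bang_P P\<^esub> \<beta>' = (\<lambda>i. \<beta> i \<otimes>\<^bsub>P\<^esub> \<beta>' i)"
  "\<one>\<^bsub>bang_P P\<^esub> = (\<lambda>i. \<one>\<^bsub>P\<^esub>)"
  by (simp_all add: bang_P_def)

lemma bang_N_simps [simp]:
  "carrier (bang_N N) = {(\<pi>, \<alpha>). bij \<pi> \<and> (\<forall>i. \<alpha> i \<in> carrier N)}"
  "(\<pi>, \<alpha>) \<otimes>\<^bsub>bang_N N\<^esub> (\<pi>', \<alpha>') = (\<pi> \<circ> \<pi>', \<lambda>i. \<alpha> (\<pi>' i) \<otimes>\<^bsub>N\<^esub> \<alpha>' i)"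
  "\<one>\<^bsub>bang_N N\<^esub> = (id, \<lambda>i. \<one>\<^bsub>N\<^esub>)"
  by (simp_all add: bang_N_def)

lemma group_bang_P:
  assumes "group P"
  shows "group (bang_P P)"
proof -
  interpret group P by fact
  show ?thesis
  proof (rule groupI)
    fix \<beta> assume "\<beta> \<in> carrier (bang_P P)"
    then show "\<exists>\<gamma>\<in>carrier (bang_P P). \<gamma> \<otimes>\<^bsub>bang_P P\<^esub> \<beta> = \<one>\<^bsub>bang_P P\<^esub>"
      by (intro bexI[of _ "\<lambda>i. inv\<^bsub>P\<^esub> (\<beta> i)"]) auto
  qed (auto simp: m_assoc)
qed

lemma group_bang_N:
  assumes "group N"
  shows "group (bang_N N)"
proof -
  interpret group N by fact
  show ?thesis
  proof (rule groupI)
    fix g assume "g \<in> carrier (bang_N N)"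
    then obtain \<pi> \<alpha> where g: "g = (\<pi>, \<alpha>)" and \<pi>: "bij \<pi>" and \<alpha>: "\<forall>i. \<alpha> i \<in> carrier N"
      by auto
    define h where "h = (inv_into UNIV \<pi>, \<lambda>j. inv\<^bsub>N\<^esub> (\<alpha> (inv_into UNIV \<pi> j)))"
    have "inv_into UNIV \<pi> (\<pi> i) = i" for i
      using \<pi> by (simp add: bij_is_inj)
    then have "h \<otimes>\<^bsub>bang_N N\<^esub> g = \<one>\<^bsub>bang_N N\<^esub>"
      using \<alpha> by (simp add: h_def g fun_eq_iff)
    moreover have "h \<in> carrier (bang_N N)"
      using \<pi> \<alpha> by (simp add: h_def bij_imp_bij_inv)
    ultimately show "\<exists>h\<in>carrier (bang_N N). h \<otimes>\<^bsub>bang_N N\<^esub> g = \<one>\<^bsub>bang_N N\<^esub>"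
      by blast
  qed (auto simp: bij_comp m_assoc o_assoc)
qed

lemma bang_actN_eq: "bang_actN actN (\<pi>, \<alpha>) = bang_map \<pi> (\<lambda>i. actN (\<alpha> i))"
  by (simp add: bang_actN_def bang_map_def)

lemma bang_actP_eq: "bang_actP actP \<beta> = bang_map id (\<lambda>i. actP (\<beta> i))"
  by (simp add: bang_actP_def bang_map_def)

lemma negative_action_bang:
  assumes "event_structure A" and "negative_es A" and act: "negative_action N A actN"
  shows "negative_action (bang_N N) (bang_es A) (bang_actN actN)"
proof -
  have one: "\<forall>a\<in>ev A. actN \<one>\<^bsub>N\<^esub> a = a"
    and mult: "\<forall>g\<in>carrier N. \<forall>h\<in>carrier N. \<forall>a\<in>ev A. actN (g \<otimes>\<^bsub>N\<^esub> h) a = actN g (actN h a)"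
    and neg: "\<forall>g\<in>carrier N. negative_aut A (actN g)"
    using act unfolding negative_action_def left_action_def by blast+
  have neg_bang: "negative_aut (bang_es A) (bang_actN actN g)" if g: "g \<in> carrier (bang_N N)" for g
  proof -
    obtain \<pi> \<alpha> where "g = (\<pi>, \<alpha>)" "bij \<pi>" "\<forall>i. \<alpha> i \<in> carrier N"
      using g by auto
    with neg negative_aut_bang_map[OF assms(1,2)] show ?thesis
      by (simp add: bang_actN_eq)
  qed
  moreover have "left_action (bang_N N) (bang_es A) (bang_actN actN)"
    unfolding left_action_def
  proof (intro conjI ballI)
    show "automorphism (bang_es A) (bang_actN actN g)" if "g \<in> carrier (bang_N N)" for g
      using neg_bang[OF that] unfolding negative_aut_def by blast
    show "bang_actN actN \<one>\<^bsub>bang_N N\<^esub> e = e" if "e \<in> ev (bang_es A)" for e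
      using that one by (auto simp: bang_actN_def)
    show "bang_actN actN (g \<otimes>\<^bsub>bang_N N\<^esub> h) e = bang_actN actN g (bang_actN actN h e)"
      if "g \<in> carrier (bang_N N)" "h \<in> carrier (bang_N N)" "e \<in> ev (bang_es A)" for g h e
      using that mult by (auto simp: bang_actN_def)
  qed
  ultimately show ?thesis
    unfolding negative_action_def by blast
qed

lemma positive_action_bang:
  assumes act: "positive_action P A actP"
  shows "positive_action (bang_P P) (bang_es A) (bang_actP actP)"
proof -
  have one: "\<forall>a\<in>ev A. actP \<one>\<^bsub>P\<^esub> a = a"
    and mult: "\<forall>g\<in>carrier P. \<forall>h\<in>carrier P. \<forall>a\<in>ev A. actP (g \<otimes>\<^bsub>P\<^esub> h) a = actP g (actP h a)"
    and pos: "\<forall>g\<in>carrier P. positive_aut A (actP g)"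
    using act unfolding positive_action_def left_action_def by blast+
  have pos_bang: "positive_aut (bang_es A) (bang_actP actP \<beta>)" if "\<beta> \<in> carrier (bang_P P)" for \<beta>
    unfolding bang_actP_eq by (rule positive_aut_bang_map) (use that pos in simp)
  moreover have "left_action (bang_P P) (bang_es A) (bang_actP actP)"
    unfolding left_action_def
  proof (intro conjI ballI)
    show "automorphism (bang_es A) (bang_actP actP \<beta>)" if "\<beta> \<in> carrier (bang_P P)" for \<beta>
      using pos_bang[OF that] unfolding positive_aut_def by blast
    show "bang_actP actP \<one>\<^bsub>bang_P P\<^esub> e = e" if "e \<in> ev (bang_es A)" for e
      using that one by (auto simp: bang_actP_def)
    show "bang_actP actP (\<beta> \<otimes>\<^bsub>bang_P P\<^esub> \<gamma>) e = bang_actP actP \<beta> (bang_actP actP \<gamma> e)"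
      if "\<beta> \<in> carrier (bang_P P)" "\<gamma> \<in> carrier (bang_P P)" "e \<in> ev (bang_es A)" for \<beta> \<gamma> e
      using that mult by (auto simp: bang_actP_def)
  qed
  ultimately show ?thesis
    unfolding positive_action_def by blast
qed

lemma bang_lam_apply [simp]:
  "bang_lam lam ((\<pi>, \<alpha>), \<beta>) =
     ((\<lambda>i. fst (lam (\<alpha> (inv_into UNIV \<pi> i), \<beta> (inv_into UNIV \<pi> i)))),
      (\<pi>, (\<lambda>i. snd (lam (\<alpha> i, \<beta> i)))))"
  by (simp add: bang_lam_def)

context
  fixes N :: "('n, 'b) monoid_scheme" and P :: "('p, 'c) monoid_scheme"
    and lam :: "'n \<times> 'p \<Rightarrow> 'p \<times> 'n"
  assumes distr: "distr_law N P lam"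
begin

lemma distr_law_closed:
  assumes "\<alpha> \<in> carrier N" and "\<beta> \<in> carrier P"
  shows "fst (lam (\<alpha>, \<beta>)) \<in> carrier P" and "snd (lam (\<alpha>, \<beta>)) \<in> carrier N"
  using distr assms unfolding distr_law_def by blast+

lemma distr_law_one_P: "\<alpha> \<in> carrier N \<Longrightarrow> lam (\<alpha>, \<one>\<^bsub>P\<^esub>) = (\<one>\<^bsub>P\<^esub>, \<alpha>)"
  using distr unfolding distr_law_def by blast

lemma distr_law_one_N: "\<beta> \<in> carrier P \<Longrightarrow> lam (\<one>\<^bsub>N\<^esub>, \<beta>) = (\<beta>, \<one>\<^bsub>N\<^esub>)"
  using distr unfolding distr_law_def by blast

lemma distr_law_mult_N:
  assumes "\<alpha> \<in> carrier N" and "\<alpha>' \<in> carrier N" and "\<beta> \<in> carrier P"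
  shows "lam (\<alpha> \<otimes>\<^bsub>N\<^esub> \<alpha>', \<beta>) =
    (fst (lam (\<alpha>, fst (lam (\<alpha>', \<beta>)))), snd (lam (\<alpha>, fst (lam (\<alpha>', \<beta>)))) \<otimes>\<^bsub>N\<^esub> snd (lam (\<alpha>', \<beta>)))"
  using distr assms unfolding distr_law_def by (simp add: Let_def split_beta)

lemma distr_law_mult_P:
  assumes "\<alpha> \<in> carrier N" and "\<beta> \<in> carrier P" and "\<beta>' \<in> carrier P"
  shows "lam (\<alpha>, \<beta> \<otimes>\<^bsub>P\<^esub> \<beta>') =
    (fst (lam (\<alpha>, \<beta>)) \<otimes>\<^bsub>P\<^esub> fst (lam (snd (lam (\<alpha>, \<beta>)), \<beta>')), snd (lam (snd (lam (\<alpha>, \<beta>)), \<beta>')))"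
  using distr assms unfolding distr_law_def by (simp add: Let_def split_beta)

lemma distr_law_bang: "distr_law (bang_N N) (bang_P P) (bang_lam lam)"
  unfolding distr_law_def
proof (intro conjI ballI)
  fix g \<beta> assume g: "g \<in> carrier (bang_N N)" and \<beta>: "\<beta> \<in> carrier (bang_P P)"
  then show "fst (bang_lam lam (g, \<beta>)) \<in> carrier (bang_P P)"
    and "snd (bang_lam lam (g, \<beta>)) \<in> carrier (bang_N N)"
    by (auto simp: distr_law_closed)
next
  fix g assume "g \<in> carrier (bang_N N)"
  then show "bang_lam lam (g, \<one>\<^bsub>bang_P P\<^esub>) = (\<one>\<^bsub>bang_P P\<^esub>, g)"
    by (auto simp: distr_law_one_P)
next
  fix \<beta> assume "\<beta> \<in> carrier (bang_P P)"
  moreover have "inv_into UNIV id i = i" for i :: nat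
    by (simp add: inv_into_def)
  ultimately show "bang_lam lam (\<one>\<^bsub>bang_N N\<^esub>, \<beta>) = (\<beta>, \<one>\<^bsub>bang_N N\<^esub>)"
    by (simp add: distr_law_one_N)
next
  fix g g' \<beta>
  assume g: "g \<in> carrier (bang_N N)" and g': "g' \<in> carrier (bang_N N)" and \<beta>: "\<beta> \<in> carrier (bang_P P)"
  obtain \<pi> \<alpha> where g_eq: "g = (\<pi>, \<alpha>)" and \<pi>: "bij \<pi>" and \<alpha>: "\<forall>i. \<alpha> i \<in> carrier N"
    using g by auto
  obtain \<pi>' \<alpha>' where g'_eq: "g' = (\<pi>', \<alpha>')" and \<pi>': "bij \<pi>'" and \<alpha>': "\<forall>i. \<alpha>' i \<in> carrier N"
    using g' by auto
  have "inv_into UNIV \<pi>' (\<pi>' i) = i" and "\<pi>' (inv_into UNIV \<pi>' i) = i" for i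
    using \<pi>' by (simp_all add: bij_is_inj bij_is_surj surj_f_inv_f)
  then show "bang_lam lam (g \<otimes>\<^bsub>bang_N N\<^esub> g', \<beta>) =
      (let (\<beta>1, \<alpha>1) = bang_lam lam (g', \<beta>); (\<beta>2, \<alpha>2) = bang_lam lam (g, \<beta>1)
       in (\<beta>2, \<alpha>2 \<otimes>\<^bsub>bang_N N\<^esub> \<alpha>1))"
    using \<alpha> \<alpha>' \<beta>
    by (simp add: g_eq g'_eq Let_def o_inv_distrib[OF \<pi> \<pi>'] distr_law_mult_N distr_law_closed)
next
  fix g \<beta> \<beta>'
  assume g: "g \<in> carrier (bang_N N)" and "\<beta> \<in> carrier (bang_P P)" and "\<beta>' \<in> carrier (bang_P P)"
  moreover obtain \<pi> \<alpha> where "g = (\<pi>, \<alpha>)" and "\<forall>i. \<alpha> i \<in> carrier N"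
    using g by auto
  ultimately show "bang_lam lam (g, \<beta> \<otimes>\<^bsub>bang_P P\<^esub> \<beta>') =
      (let (\<beta>1, \<alpha>1) = bang_lam lam (g, \<beta>); (\<beta>2, \<alpha>2) = bang_lam lam (\<alpha>1, \<beta>')
       in (\<beta>1 \<otimes>\<^bsub>bang_P P\<^esub> \<beta>2, \<alpha>2))"
    by (simp add: Let_def distr_law_mult_P)
qed

end

lemma bang_actions_interchange:
  assumes interchange: "\<forall>\<alpha>\<in>carrier N. \<forall>\<beta>\<in>carrier P. \<forall>a\<in>ev A.
    actN \<alpha> (actP \<beta> a) = actP (fst (lam (\<alpha>, \<beta>))) (actN (snd (lam (\<alpha>, \<beta>))) a)"
  shows "\<forall>g\<in>carrier (bang_N N). \<forall>\<beta>\<in>carrier (bang_P P). \<forall>e\<in>ev (bang_es A).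
    bang_actN actN g (bang_actP actP \<beta> e) =
      bang_actP actP (fst (bang_lam lam (g, \<beta>))) (bang_actN actN (snd (bang_lam lam (g, \<beta>))) e)"
proof (intro ballI)
  fix g \<beta> e
  assume g: "g \<in> carrier (bang_N N)" and \<beta>: "\<beta> \<in> carrier (bang_P P)" and e: "e \<in> ev (bang_es A)"
  obtain \<pi> \<alpha> where g_eq: "g = (\<pi>, \<alpha>)" and \<pi>: "bij \<pi>" and \<alpha>: "\<forall>i. \<alpha> i \<in> carrier N"
    using g by auto
  obtain i a where e_eq: "e = (i, a)" and a: "a \<in> ev A"
    using e by auto
  have "inv_into UNIV \<pi> (\<pi> i) = i"
    using \<pi> by (simp add: bij_is_inj)
  moreover have "actN (\<alpha> i) (actP (\<beta> i) a) =
      actP (fst (lam (\<alpha> i, \<beta> i))) (actN (snd (lam (\<alpha> i, \<beta> i))) a)"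
    using interchange \<alpha> \<beta> a by simp
  ultimately show "bang_actN actN g (bang_actP actP \<beta> e) =
      bang_actP actP (fst (bang_lam lam (g, \<beta>))) (bang_actN actN (snd (bang_lam lam (g, \<beta>))) e)"
    by (simp add: g_eq e_eq bang_actN_def bang_actP_def)
qed

theorem mainTheorem3:
  fixes A :: "('a, 'z) evs_scheme"
    and N :: "('n, 'b) monoid_scheme" and actN :: "'n \<Rightarrow> 'a \<Rightarrow> 'a"
    and P :: "('p, 'c) monoid_scheme" and actP :: "'p \<Rightarrow> 'a \<Rightarrow> 'a"
    and lam :: "'n \<times> 'p \<Rightarrow> 'p \<times> 'n"
  assumes "negative_game A N actN P actP lam"
  shows "game (bang_es A) (bang_N N) (bang_actN actN) (bang_P P) (bang_actP actP) (bang_lam lam)"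
proof -
  have es: "event_structure A" and gN: "group N" and gP: "group P"
    and na: "negative_action N A actN" and pa: "positive_action P A actP"
    and distr: "distr_law N P lam"
    and interchange: "\<forall>\<alpha>\<in>carrier N. \<forall>\<beta>\<in>carrier P. \<forall>a\<in>ev A.
      actN \<alpha> (actP \<beta> a) = actP (fst (lam (\<alpha>, \<beta>))) (actN (snd (lam (\<alpha>, \<beta>))) a)"
    and neg: "negative_es A"
    using assms unfolding negative_game_def game_def negative_es_def by blast+
  show ?thesis
    unfolding game_def
    using event_structure_bang[OF es] group_bang_N[OF gN] group_bang_P[OF gP]
      negative_action_bang[OF es neg na] positive_action_bang[OF pa] distr_law_bang[OF distr]
      bang_actions_interchange[OF interchange]
    by blast
qed

end
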